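(* Let $\mu\in\mathbb{R}$, $\sigma^2>0$, and let $f(x)=\frac{1}{x\sqrt{2\pi\sigma^2}}\exp\left\{-\frac{(\log x-\mu)^2}{2\sigma^2}\right\}$ for $x\in(0,\infty)$ be the log-normal density. Then for every real $p\in(0,\infty)$, the number $\nu_p=\exp\left\{\mu+\frac{p-1}{2}\sigma^2\right\}$ satisfies $$\int_0^{\nu_p} y^{p-1} f(\nu_p-y)\,dy=\int_0^{\infty} y^{p-1} f(\nu_p+y)\,dy.$$ *)

theory Defs
  imports "HOL-Analysis.Analysis"
begin

definition lognormal_density :: "real \<Rightarrow> real \<Rightarrow> real \<Rightarrow> real" where
  "lognormal_density mu s2 x =
     (if x > 0 then 1 / (x * sqrt (2 * pi * s2)) * exp (- ((ln x - mu)^2) / (2 * s2)) else 0)"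

end

theory Submission
  imports Defs
begin

(* The substitution y = \<nu> z / (\<nu> + z) maps (0, \<infinity>) increasingly onto (0, \<nu>), with
   \<nu> - y = \<nu>^2 / (\<nu> + z) and dy = \<nu>^2 / (\<nu> + z)^2 dz. Completing the square in ln w shows
   that the log-normal density f has the inversion symmetry f (\<nu>^2 / w) = (w / \<nu>) powr (p + 1) * f w
   exactly for \<nu> = exp (\<mu> + (p - 1) \<sigma>^2 / 2), and this turns the transformed integrand into
   z powr (p - 1) * f (\<nu> + z). *)

lemma set_nn_integral_UN_incseq:
  fixes F :: "'a \<Rightarrow> ennreal"
  assumes "incseq A" and [measurable]: "\<And>i. A i \<in> sets M"
    and [measurable]: "(\<lambda>x. F x * indicator (\<Union>i. A i) x) \<in> borel_measurable M"
  shows "(\<integral>\<^sup>+x \<in> (\<Union>i. A i). F x \<partial>M) = (SUP i. \<integral>\<^sup>+x \<in> A i. F x \<partial>M)"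
proof -
  have ind: "F x * indicator (A i) x = (F x * indicator (\<Union>i. A i) x) * indicator (A i) x" for x i
    by (auto split: split_indicator)
  have "(\<lambda>x. F x * indicator (\<Union>i. A i) x) = (\<lambda>x. SUP i. F x * indicator (A i) x)"
  proof
    fix x show "F x * indicator (\<Union>i. A i) x = (SUP i. F x * indicator (A i) x)"
    proof (cases "x \<in> (\<Union>i. A i)")
      case True
      then obtain j where "x \<in> A j" by blast
      then have "F x \<le> (SUP i. F x * indicator (A i) x)"
        by (intro SUP_upper2[of j]) auto
      moreover have "(SUP i. F x * indicator (A i) x) \<le> F x"
        by (intro SUP_least) (auto split: split_indicator)
      ultimately show ?thesis using True by (simp add: antisym)
    qed auto
  qed
  then have "(\<integral>\<^sup>+x \<in> (\<Union>i. A i). F x \<partial>M) = (\<integral>\<^sup>+x. (SUP i. F x * indicator (A i) x) \<partial>M)"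
    by simp
  also have "\<dots> = (SUP i. \<integral>\<^sup>+x \<in> A i. F x \<partial>M)"
    using \<open>incseq A\<close> unfolding ind
    by (intro nn_integral_monotone_convergence_SUP)
       (auto simp: incseq_def le_fun_def intro!: mult_left_mono split: split_indicator)
  finally show ?thesis .
qed

lemma ennreal_mult_indicator: "ennreal r * indicator S x = ennreal (r * indicator S x)"
  by (simp split: split_indicator)

lemma nn_integral_substitution_einterval:
  fixes f g g' :: "real \<Rightarrow> real" and a b :: ereal
  assumes f[measurable]: "f \<in> borel_measurable borel"
    and deriv: "\<And>x. x \<in> einterval a b \<Longrightarrow> (g has_real_derivative g' x) (at x)"
    and contg': "continuous_on (einterval a b) g'"
    and g'_nonneg: "\<And>x. x \<in> einterval a b \<Longrightarrow> 0 \<le> g' x"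
  shows "(\<integral>\<^sup>+y \<in> g ` einterval a b. ennreal (f y) \<partial>lborel)
       = (\<integral>\<^sup>+x \<in> einterval a b. ennreal (f (g x) * g' x) \<partial>lborel)"
proof (cases "a < b")
  case False
  then have "einterval a b = {}"
    by (auto simp: einterval_def)
  then show ?thesis by simp
next
  case True
  obtain u l :: "nat \<Rightarrow> real" where I: "einterval a b = (\<Union>i. {l i..u i})"
    and "incseq u" "decseq l" "\<And>i. l i < u i"
    by (blast intro: einterval_Icc_approximation[OF True])
  have convex: "{x..y} \<subseteq> einterval a b" if "x \<in> einterval a b" "y \<in> einterval a b" for x y
    using that by (auto simp: einterval_iff; metis ereal_less_eq(3) le_less_trans less_le_trans)
  have contg: "continuous_on (einterval a b) g"
    by (meson DERIV_isCont continuous_at_imp_continuous_on deriv)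
  have g_mono: "g x \<le> g y" if "x \<in> einterval a b" "y \<in> einterval a b" "x \<le> y" for x y
    using convex[OF that(1,2)] that(3)
    by (intro deriv_nonneg_imp_mono[of x y g g']) (auto intro: deriv g'_nonneg)
  have image_Icc: "g ` {x..y} = {g x..g y}" if "x \<in> einterval a b" "y \<in> einterval a b" "x \<le> y" for x y
  proof
    show "g ` {x..y} \<subseteq> {g x..g y}"
      using convex[OF that(1,2)] that by (auto intro!: g_mono)
    show "{g x..g y} \<subseteq> g ` {x..y}"
      using IVT'[of g x _ y] continuous_on_subset[OF contg convex[OF that(1,2)]] that(3)
      by fastforce
  qed
  have Icc_sub: "{l i..u i} \<subseteq> einterval a b" for i
    using I by blast
  have lu: "l i \<in> einterval a b" "u i \<in> einterval a b" "l i \<le> u i" for i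
    using Icc_sub[of i] \<open>l i < u i\<close> by auto
  have inc: "incseq (\<lambda>i. {l i..u i})"
    using \<open>incseq u\<close> \<open>decseq l\<close> by (auto simp: incseq_def decseq_def intro: order_trans)
  have image: "g ` einterval a b = (\<Union>i. {g (l i)..g (u i)})"
    unfolding I image_UN using image_Icc[OF lu] by simp
  have inc_image: "incseq (\<lambda>i. {g (l i)..g (u i)})"
    using inc unfolding image_Icc[OF lu, symmetric] incseq_def by (blast intro: image_mono)
  have "(\<lambda>x. ennreal (f (g x) * g' x)) \<in> borel_measurable (restrict_space borel (einterval a b))"
    using borel_measurable_continuous_on_restrict[OF contg]
      borel_measurable_continuous_on_restrict[OF contg'] by measurable
  then have meas: "(\<lambda>x. ennreal (f (g x) * g' x) * indicator (einterval a b) x) \<in> borel_measurable borel"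
    by (subst borel_measurable_restrict_space_iff_ennreal[symmetric]) auto
  have "(\<integral>\<^sup>+y \<in> g ` einterval a b. ennreal (f y) \<partial>lborel)
      = (SUP i. \<integral>\<^sup>+y \<in> {g (l i)..g (u i)}. ennreal (f y) \<partial>lborel)"
    unfolding image by (rule set_nn_integral_UN_incseq[OF inc_image]) auto
  also have "\<dots> = (SUP i. \<integral>\<^sup>+x \<in> {l i..u i}. ennreal (f (g x) * g' x) \<partial>lborel)"
  proof (intro SUP_cong refl)
    fix i
    have "(\<integral>\<^sup>+y. ennreal (f y * indicator {g (l i)..g (u i)} y) \<partial>lborel)
        = (\<integral>\<^sup>+x. ennreal (f (g x) * g' x * indicator {l i..u i} x) \<partial>lborel)"
      using Icc_sub[of i] lu[of i] by (intro nn_integral_substitution deriv g'_nonneg continuous_on_subset[OF contg'])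
        (auto simp: set_borel_measurable_def)
    then show "(\<integral>\<^sup>+y \<in> {g (l i)..g (u i)}. ennreal (f y) \<partial>lborel)
        = (\<integral>\<^sup>+x \<in> {l i..u i}. ennreal (f (g x) * g' x) \<partial>lborel)"
      by (simp only: ennreal_mult_indicator)
  qed
  also have "\<dots> = (\<integral>\<^sup>+x \<in> einterval a b. ennreal (f (g x) * g' x) \<partial>lborel)"
    unfolding I by (rule set_nn_integral_UN_incseq[OF inc, symmetric]) (use meas I in auto)
  finally show ?thesis .
qed

lemma DERIV_mult_divide_add:
  fixes c z :: real
  assumes "c + z \<noteq> 0"
  shows "((\<lambda>z. c * z / (c + z)) has_real_derivative c\<^sup>2 / (c + z)\<^sup>2) (at z)"
  using assms by (auto intro!: derivative_eq_intros simp: field_simps power2_eq_square)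

lemma image_mult_divide_add_Ioi:
  fixes c :: real
  assumes "c > 0"
  shows "(\<lambda>z. c * z / (c + z)) ` {0<..} = {0<..<c}"
proof
  show "(\<lambda>z. c * z / (c + z)) ` {0<..} \<subseteq> {0<..<c}"
    using assms by (auto simp: field_simps)
  show "{0<..<c} \<subseteq> (\<lambda>z. c * z / (c + z)) ` {0<..}"
  proof
    fix y assume y: "y \<in> {0<..<c}"
    then have "y = c * (c * y / (c - y)) / (c + c * y / (c - y))" and "c * y / (c - y) > 0"
      using assms by (auto simp: field_simps)
    then show "y \<in> (\<lambda>z. c * z / (c + z)) ` {0<..}"
      by blast
  qed
qed

lemma borel_measurable_lognormal_density [measurable]:
  "(\<lambda>x. lognormal_density mu s2 (f x)) \<in> borel_measurable M" if [measurable]: "f \<in> borel_measurable M"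
  unfolding lognormal_density_def by measurable

lemma lognormal_density_eq_exp:
  "x > 0 \<Longrightarrow> lognormal_density mu s2 x = exp (- ln x - (ln x - mu)\<^sup>2 / (2 * s2)) / sqrt (2 * pi * s2)"
  by (simp add: lognormal_density_def exp_diff exp_minus field_simps)

lemma lognormal_density_inversion:
  fixes mu s2 p w :: real
  assumes "s2 > 0" and "w > 0"
  defines "\<nu> \<equiv> exp (mu + (p - 1) / 2 * s2)"
  shows "lognormal_density mu s2 (\<nu>\<^sup>2 / w) = (w / \<nu>) powr (p + 1) * lognormal_density mu s2 w"
proof -
  define l where "l = mu + (p - 1) / 2 * s2"
  have ln_quot: "ln (\<nu>\<^sup>2 / w) = 2 * l - ln w" "ln (w / \<nu>) = ln w - l"
    using \<open>w > 0\<close> by (simp_all add: \<nu>_def l_def ln_div ln_mult power2_eq_square)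
  have "- (2 * l - ln w) - (2 * l - ln w - mu)\<^sup>2 / (2 * s2)
      = (p + 1) * (ln w - l) + (- ln w - (ln w - mu)\<^sup>2 / (2 * s2))"
    using \<open>s2 > 0\<close> by (simp add: l_def field_simps power2_eq_square)
  moreover have "\<nu> > 0"
    by (simp add: \<nu>_def)
  ultimately show ?thesis
    using \<open>w > 0\<close> by (simp add: lognormal_density_eq_exp powr_def ln_quot exp_add[symmetric])
qed

lemma lognormal_integrand_substitution:
  fixes mu s2 p z :: real
  assumes "s2 > 0" and "z > 0"
  defines "\<nu> \<equiv> exp (mu + (p - 1) / 2 * s2)"
  shows "(\<nu> * z / (\<nu> + z)) powr (p - 1) * lognormal_density mu s2 (\<nu> - \<nu> * z / (\<nu> + z)) * (\<nu>\<^sup>2 / (\<nu> + z)\<^sup>2)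
       = z powr (p - 1) * lognormal_density mu s2 (\<nu> + z)"
proof -
  define w where "w = \<nu> + z"
  have "\<nu> > 0"
    by (simp add: \<nu>_def)
  then have "w > 0"
    using \<open>z > 0\<close> by (simp add: w_def)
  have diff: "\<nu> - \<nu> * z / w = \<nu>\<^sup>2 / w"
    using \<open>w > 0\<close> by (simp add: w_def field_simps power2_eq_square)
  have powers: "(\<nu> * z / w) powr (p - 1) * (w / \<nu>) powr (p + 1) = z powr (p - 1) * (w / \<nu>)\<^sup>2"
  proof -
    have "(\<nu> * z / w) powr (p - 1) * (w / \<nu>) powr (p - 1) = z powr (p - 1)"
      using \<open>\<nu> > 0\<close> \<open>w > 0\<close> \<open>z > 0\<close> by (simp add: powr_mult[symmetric])
    moreover have "(w / \<nu>) powr (p + 1) = (w / \<nu>) powr (p - 1) * (w / \<nu>) powr 2"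
      by (simp only: powr_add[symmetric]) (simp add: algebra_simps)
    ultimately show ?thesis
      using \<open>\<nu> > 0\<close> \<open>w > 0\<close> by (simp add: mult.assoc)
  qed
  have "(\<nu> * z / w) powr (p - 1) * lognormal_density mu s2 (\<nu> - \<nu> * z / w) * (\<nu>\<^sup>2 / w\<^sup>2)
      = ((\<nu> * z / w) powr (p - 1) * (w / \<nu>) powr (p + 1)) * lognormal_density mu s2 w * (\<nu>\<^sup>2 / w\<^sup>2)"
    using lognormal_density_inversion[OF \<open>s2 > 0\<close> \<open>w > 0\<close>, of mu p]
    unfolding \<nu>_def[symmetric] diff by (simp only: mult.assoc)
  also have "\<dots> = (z powr (p - 1) * (w / \<nu>)\<^sup>2) * lognormal_density mu s2 w * (\<nu>\<^sup>2 / w\<^sup>2)"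
    by (simp only: powers)
  also have "\<dots> = z powr (p - 1) * lognormal_density mu s2 w * ((w / \<nu>)\<^sup>2 * (\<nu>\<^sup>2 / w\<^sup>2))"
    by (simp only: ac_simps)
  also have "\<dots> = z powr (p - 1) * lognormal_density mu s2 w"
    using \<open>\<nu> > 0\<close> \<open>w > 0\<close> by (simp add: field_simps)
  finally show ?thesis
    by (simp only: w_def)
qed

theorem theorem2:
  fixes mu s2 p :: real
  assumes "s2 > 0" and "p > 0"
  defines "\<nu> \<equiv> exp (mu + (p - 1) / 2 * s2)"
  shows "(\<integral>\<^sup>+ y \<in> {0<..<\<nu>}. ennreal (y powr (p - 1) * lognormal_density mu s2 (\<nu> - y)) \<partial>lborel)
       = (\<integral>\<^sup>+ y \<in> {0<..}. ennreal (y powr (p - 1) * lognormal_density mu s2 (\<nu> + y)) \<partial>lborel)"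
proof -
  define k where "k y = y powr (p - 1) * lognormal_density mu s2 (\<nu> - y)" for y
  define g where "g = (\<lambda>z. \<nu> * z / (\<nu> + z))"
  define g' where "g' z = \<nu>\<^sup>2 / (\<nu> + z)\<^sup>2" for z
  have "\<nu> > 0"
    by (simp add: \<nu>_def)
  have Ioi: "einterval 0 \<infinity> = {0::real<..}"
    by (simp add: zero_ereal_def)
  have "(\<integral>\<^sup>+ y \<in> {0<..<\<nu>}. ennreal (k y) \<partial>lborel) = (\<integral>\<^sup>+ y \<in> g ` einterval 0 \<infinity>. ennreal (k y) \<partial>lborel)"
    using image_mult_divide_add_Ioi[OF \<open>\<nu> > 0\<close>] by (simp add: Ioi g_def)
  also have "\<dots> = (\<integral>\<^sup>+ z \<in> einterval 0 \<infinity>. ennreal (k (g z) * g' z) \<partial>lborel)"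
    using \<open>\<nu> > 0\<close>
    by (intro nn_integral_substitution_einterval)
       (auto simp: Ioi k_def g_def g'_def intro!: DERIV_mult_divide_add continuous_intros)
  also have "\<dots> = (\<integral>\<^sup>+ y \<in> {0<..}. ennreal (y powr (p - 1) * lognormal_density mu s2 (\<nu> + y)) \<partial>lborel)"
    using lognormal_integrand_substitution[OF \<open>s2 > 0\<close>, of _ mu p]
    unfolding Ioi \<nu>_def[symmetric] k_def g_def g'_def
    by (intro nn_integral_cong) (simp split: split_indicator)
  finally show ?thesis
    by (simp only: k_def)
qed

end
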